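(* Let $m\ge2$, $a\in(0,1/m)$, and $\Sigma=\Sigma_{HC}^+=\mathrm{cl}(\pi_a(X_a))\subset\{1,\ldots,2m\}^{\mathbb Z^+}$. The set of vertices of the follower set graph of $\Sigma$ is $\{\Theta^\xi:\xi \text{ a finite word (possibly empty) over }\{1,\ldots,m\}\}$, and the labeled edges of the graph are exactly: $\Theta^\xi\xrightarrow{i}\Theta^{\xi i}$ and $\Theta^{\xi i}\xrightarrow{i+m}\Theta^\xi$ for every finite word $\xi$ over $\{1,\ldots,m\}$ and every $i\in\{1,\ldots,m\}$; and $\Theta^\emptyset\xrightarrow{i}\Theta^\emptyset$ for every $i\in\{m+1,\ldots,2m\}$.
   Context: $F_a(x)=\frac{x-(i-1)a}{a}$ on $[(i-1)a,ia)$, $i\in\{1,\ldots,m\}$, and $F_a(x)=\frac{x-ma}{1-ma}$ on $[ma,1]$. $\Omega_i^+=[(i-1)a,ia)\times[0,1]$ for $i\le m$; $\Omega_i^+=[ma,1]\times[\frac{i-m-1}{m},\frac{i-m}{m})$ for $m+1\le i\le 2m-1$; $\Omega_{2m}^+=[ma,1]\times[\frac{m-1}{m},1]$. $f_a(x,y)=(F_a(x),\frac{y}{m}+\frac{i-1}{m})$ on $\Omega_i^+$ for $i\le m$, $f_a(x,y)=(F_a(x),my-i+m+1)$ on $\Omega_i^+$ for $i\ge m+1$. $X_a=\bigcap_{n\ge0}f_a^{-n}(\bigcup_i\mathrm{int}(\Omega_i^+))$ and $\pi_a(p)=(\omega_n)_{n\ge0}$ where $f_a^n(p)\in\mathrm{int}(\Omega^+_{\omega_n})$;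 closure in the product topology. For a one-sided subshift $\Sigma$ on a finite set $S$, $L(\Sigma)$ is the set of finite words (including the empty word $\emptyset$, with $\emptyset\xi=\xi\emptyset=\xi$) appearing in elements of $\Sigma$. For $\xi\in L(\Sigma)$ the follower set is $\Theta^\xi=\{\eta\in\Sigma:\xi\eta\in\Sigma\}$. The follower set graph of $\Sigma$ is the $S$-labeled directed graph whose vertices are the follower sets (as subsets of $\Sigma$), with a $\gamma$-labeled edge $\Theta^\xi\xrightarrow{\gamma}\Theta^\eta$ if and only if $\xi\gamma\in L(\Sigma)$ and $\Theta^\eta=\Theta^{\xi\gamma}$. *)

theory Defs
  imports "HOL-Analysis.Analysis"
begin

definition Omega :: "real \<Rightarrow> nat \<Rightarrow> nat \<Rightarrow> (real \<times> real) set" where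
  "Omega a m i =
     (if i \<le> m then {(real i - 1) * a ..< real i * a} \<times> {0..1}
      else if i \<le> 2*m - 1 then {real m * a .. 1} \<times> {(real i - real m - 1) / real m ..< (real i - real m) / real m}
      else {real m * a .. 1} \<times> {(real m - 1) / real m .. 1})"

definition F_map :: "real \<Rightarrow> nat \<Rightarrow> real \<Rightarrow> real" where
  "F_map a m x =
     (if x < real m * a then
        (let i = (THE i. i \<in> {1..m} \<and> x \<in> {(real i - 1) * a ..< real i * a})
         in (x - (real i - 1) * a) / a)
      else (x - real m * a) / (1 - real m * a))"

text \<open>The map f_a (its values outside the unit square are irrelevant).\<close>
definition f_map :: "real \<Rightarrow> nat \<Rightarrow> real \<times> real \<Rightarrow> real \<times> real" where
  "f_map a m p =
     (let i = (THE i. i \<in> {1..2*m} \<and> p \<in> Omega a m i)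
      in if i \<le> m then (F_map a m (fst p), snd p / real m + (real i - 1) / real m)
         else (F_map a m (fst p), real m * snd p - real i + real m + 1))"

definition X_set :: "real \<Rightarrow> nat \<Rightarrow> (real \<times> real) set" where
  "X_set a m = (\<Inter>n. (f_map a m ^^ n) -` (\<Union>i\<in>{1..2*m}. interior (Omega a m i)))"

definition pi_map :: "real \<Rightarrow> nat \<Rightarrow> real \<times> real \<Rightarrow> (nat \<Rightarrow> nat)" where
  "pi_map a m p = (\<lambda>n. THE i. i \<in> {1..2*m} \<and> (f_map a m ^^ n) p \<in> interior (Omega a m i))"

text \<open>Sigma_HC^+ : closure in the product topology (nat carries the discrete topology).\<close>
definition Sigma_HC :: "real \<Rightarrow> nat \<Rightarrow> (nat \<Rightarrow> nat) set" where
  "Sigma_HC a m = closure (pi_map a m ` X_set a m)"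

definition conc :: "nat list \<Rightarrow> (nat \<Rightarrow> nat) \<Rightarrow> (nat \<Rightarrow> nat)" where
  "conc xs \<eta> = (\<lambda>n. if n < length xs then xs ! n else \<eta> (n - length xs))"

definition lang :: "(nat \<Rightarrow> nat) set \<Rightarrow> nat list set" where
  "lang \<Sigma> = {xs. \<exists>\<omega>\<in>\<Sigma>. \<exists>k. \<forall>j<length xs. \<omega> (k + j) = xs ! j}"

definition follower :: "(nat \<Rightarrow> nat) set \<Rightarrow> nat list \<Rightarrow> (nat \<Rightarrow> nat) set" where
  "follower \<Sigma> \<xi> = {\<eta> \<in> \<Sigma>. conc \<xi> \<eta> \<in> \<Sigma>}"

definition fsg_vertices :: "(nat \<Rightarrow> nat) set \<Rightarrow> (nat \<Rightarrow> nat) set set" where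
  "fsg_vertices \<Sigma> = {follower \<Sigma> \<xi> | \<xi>. \<xi> \<in> lang \<Sigma>}"

definition fsg_edges :: "nat set \<Rightarrow> (nat \<Rightarrow> nat) set \<Rightarrow> ((nat \<Rightarrow> nat) set \<times> nat \<times> (nat \<Rightarrow> nat) set) set" where
  "fsg_edges S \<Sigma> = {(follower \<Sigma> \<xi>, \<gamma>, follower \<Sigma> \<eta>) | \<xi> \<gamma> \<eta>.
      \<xi> \<in> lang \<Sigma> \<and> \<eta> \<in> lang \<Sigma> \<and> \<gamma> \<in> S \<and> \<xi> @ [\<gamma>] \<in> lang \<Sigma> \<and>
      follower \<Sigma> \<eta> = follower \<Sigma> (\<xi> @ [\<gamma>])}"

end

theory Submission
  imports Defs
begin

(* Read the letters 1..m as pushes and m+1..2m as pops onto a stack over {1..m}. The closure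
   Sigma_HC behaves like a stack: a pop right after push i is i+m, a pop can always be prepended
   (an empty stack pops freely), and a pair i (i+m) can be inserted or cancelled after any word of
   pushes. Hence every follower set is that of the stack word obtained by cancelling matched pairs.
   The stack lives in the y-coordinate, written in base m: push i maps y to (y + i - 1)/m and pop
   i+m undoes this, while the expanding x-coordinate lets any code be realised. So the stack rules
   hold on the coded orbits pi_a(X_a); they are either closed conditions on finitely many symbols or
   are transported by continuous maps on cylinders, and so they pass to the closure. *)

definition seq_drop :: "nat \<Rightarrow> (nat \<Rightarrow> 'a) \<Rightarrow> nat \<Rightarrow> 'a" where
  "seq_drop k \<omega> = (\<lambda>n. \<omega> (n + k))"

lemma conc_Nil [simp]: "conc [] \<eta> = \<eta>"
  by (simp add: conc_def)

lemma conc_append: "conc (xs @ ys) \<eta> = conc xs (conc ys \<eta>)"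
  by (auto simp: conc_def nth_append fun_eq_iff)

lemma conc_nth_prefix: "n < length xs \<Longrightarrow> conc xs \<eta> n = xs ! n"
  by (simp add: conc_def)

lemma seq_drop_conc [simp]: "seq_drop (length xs) (conc xs \<eta>) = \<eta>"
  by (simp add: seq_drop_def conc_def fun_eq_iff)

lemma conc_seq_drop: "(\<And>n. n < length xs \<Longrightarrow> \<omega> n = xs ! n) \<Longrightarrow> conc xs (seq_drop (length xs) \<omega>) = \<omega>"
  by (auto simp: seq_drop_def conc_def fun_eq_iff)

lemma conc_map_seq_drop: "conc (map \<omega> [0..<k]) (seq_drop k \<omega>) = \<omega>"
  by (simp add: conc_def seq_drop_def fun_eq_iff)

section \<open>Closures in the product topology\<close>

lemma continuous_on_conc: "continuous_on UNIV (conc xs)"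
proof (rule continuous_on_coordinatewise_then_product)
  fix n
  show "continuous_on UNIV (\<lambda>\<eta>. conc xs \<eta> n)"
    by (cases "n < length xs") (simp_all add: conc_def)
qed

lemma continuous_on_seq_drop: "continuous_on UNIV (seq_drop k :: (nat \<Rightarrow> 'a::topological_space) \<Rightarrow> _)"
  unfolding seq_drop_def by (intro continuous_on_coordinatewise_then_product) simp

lemma open_cylinder: "open {\<beta> :: nat \<Rightarrow> 'a::discrete_topology. \<forall>n<N. \<beta> n = \<alpha> n}"
proof -
  have "{\<beta> :: nat \<Rightarrow> 'a. \<forall>n<N. \<beta> n = \<alpha> n} = (\<Inter>n\<in>{..<N}. (\<lambda>\<beta>. \<beta> n) -` {\<alpha> n})"
    by auto
  then show ?thesis
    by (simp add: open_INT open_vimage open_discrete)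
qed

lemma closed_prefix_determined:
  fixes B :: "(nat \<Rightarrow> 'a::discrete_topology) set"
  assumes "\<And>\<alpha> \<beta>. (\<forall>n<N. \<alpha> n = \<beta> n) \<Longrightarrow> \<alpha> \<in> B \<Longrightarrow> \<beta> \<in> B"
  shows "closed B"
proof -
  have "- B = (\<Union>\<alpha>\<in>-B. {\<beta>. \<forall>n<N. \<beta> n = \<alpha> n})"
    using assms by fastforce
  moreover have "open (\<Union>\<alpha>\<in>-B. {\<beta>. \<forall>n<N. \<beta> n = \<alpha> n})"
    by (intro open_UN ballI open_cylinder)
  ultimately show ?thesis
    by (simp add: closed_def)
qed

lemma closure_two_symbol_property:
  fixes A :: "(nat \<Rightarrow> 'a::discrete_topology) set"
  assumes "\<And>\<alpha>. \<alpha> \<in> A \<Longrightarrow> P (\<alpha> n) (\<alpha> (Suc n))" and "\<omega> \<in> closure A"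
  shows "P (\<omega> n) (\<omega> (Suc n))"
proof -
  have "closed {\<alpha>. P (\<alpha> n) (\<alpha> (Suc n))}"
    by (rule closed_prefix_determined[of "Suc (Suc n)"]) auto
  then have "closure A \<subseteq> {\<alpha>. P (\<alpha> n) (\<alpha> (Suc n))}"
    using assms(1) by (intro closure_minimal) auto
  then show ?thesis
    using assms(2) by blast
qed

lemma closure_conc_transfer:
  fixes A :: "(nat \<Rightarrow> nat) set"
  assumes g: "continuous_on UNIV g"
    and A: "\<And>\<eta>. conc w \<eta> \<in> A \<Longrightarrow> g \<eta> \<in> A"
    and w\<eta>: "conc w \<eta> \<in> closure A"
  shows "g \<eta> \<in> closure A"
proof -
  define C where "C = {\<beta> :: nat \<Rightarrow> nat. \<forall>n<length w. \<beta> n = w ! n}"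
  define f where "f = (\<lambda>\<beta>. g (seq_drop (length w) \<beta>))"
  have "f ` (C \<inter> A) \<subseteq> A"
    using A conc_seq_drop by (fastforce simp: f_def C_def)
  moreover have "continuous_on UNIV f"
    unfolding f_def using g continuous_on_seq_drop by (rule continuous_on_compose2) simp
  ultimately have "f ` closure (C \<inter> A) \<subseteq> closure A"
    by (intro image_closure_subset) (auto intro: continuous_on_subset closure_subset[THEN subsetD])
  moreover have "conc w \<eta> \<in> C \<inter> closure A"
    using w\<eta> by (simp add: C_def conc_nth_prefix)
  then have "conc w \<eta> \<in> closure (C \<inter> A)"
    using open_Int_closure_subset open_cylinder unfolding C_def by blast
  ultimately show ?thesis
    by (force simp: f_def)
qed

section \<open>Stack subshifts and their follower set graph\<close>

lemma lang_appendD: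
  assumes "w @ v \<in> lang \<Sigma>"
  shows "w \<in> lang \<Sigma>"
proof -
  obtain \<omega> k where "\<omega> \<in> \<Sigma>" "\<forall>j<length (w @ v). \<omega> (k + j) = (w @ v) ! j"
    using assms unfolding lang_def by blast
  then have "\<forall>j<length w. \<omega> (k + j) = w ! j"
    by (simp add: nth_append)
  then show ?thesis
    unfolding lang_def using \<open>\<omega> \<in> \<Sigma>\<close> by blast
qed

lemma fsg_edgesE:
  assumes "e \<in> fsg_edges A \<Sigma>"
  obtains w g v where "e = (follower \<Sigma> w, g, follower \<Sigma> v)" "w \<in> lang \<Sigma>" "v \<in> lang \<Sigma>"
    "g \<in> A" "w @ [g] \<in> lang \<Sigma>" "follower \<Sigma> v = follower \<Sigma> (w @ [g])"
  using assms unfolding fsg_edges_def mem_Collect_eq by (elim exE conjE) simp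

locale stack_shift =
  fixes S :: "(nat \<Rightarrow> nat) set" and m :: nat
  assumes nonempty: "S \<noteq> {}"
    and letters: "\<omega> \<in> S \<Longrightarrow> \<omega> n \<in> {1..2*m}"
    and suffix_closed: "conc w \<eta> \<in> S \<Longrightarrow> \<eta> \<in> S"
    and prepend_pop: "\<omega> \<in> S \<Longrightarrow> j \<in> {m+1..2*m} \<Longrightarrow> conc [j] \<omega> \<in> S"
    and pop_matches_push:
      "\<omega> \<in> S \<Longrightarrow> \<omega> n \<in> {1..m} \<Longrightarrow> \<omega> (Suc n) \<in> {m+1..2*m} \<Longrightarrow> \<omega> (Suc n) = \<omega> n + m"
    and cancel_push_pop:
      "set \<xi> \<subseteq> {1..m} \<Longrightarrow> i \<in> {1..m} \<Longrightarrow> conc \<xi> (conc [i, i+m] \<eta>) \<in> S \<longleftrightarrow> conc \<xi> \<eta> \<in> S"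
begin

lemma seq_drop_closed: "\<omega> \<in> S \<Longrightarrow> seq_drop k \<omega> \<in> S"
  using suffix_closed[of "map \<omega> [0..<k]" "seq_drop k \<omega>"] by (simp add: conc_map_seq_drop)

lemma mem_lang_iff_follower_nonempty: "w \<in> lang S \<longleftrightarrow> follower S w \<noteq> {}"
proof
  assume "w \<in> lang S"
  then obtain \<omega> k where \<omega>: "\<omega> \<in> S" "\<forall>j<length w. \<omega> (k + j) = w ! j"
    unfolding lang_def by blast
  define \<zeta> where "\<zeta> = seq_drop k \<omega>"
  have "\<zeta> \<in> S"
    using seq_drop_closed \<omega>(1) unfolding \<zeta>_def by blast
  moreover have "conc w (seq_drop (length w) \<zeta>) = \<zeta>"
    using \<omega>(2) by (intro conc_seq_drop) (simp add: \<zeta>_def seq_drop_def add.commute)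
  ultimately have "seq_drop (length w) \<zeta> \<in> follower S w"
    unfolding follower_def using seq_drop_closed by simp
  then show "follower S w \<noteq> {}"
    by blast
next
  assume "follower S w \<noteq> {}"
  then obtain \<eta> where "conc w \<eta> \<in> S"
    unfolding follower_def by blast
  then show "w \<in> lang S"
    unfolding lang_def by (intro CollectI bexI[of _ "conc w \<eta>"] exI[of _ 0]) (auto simp: conc_nth_prefix)
qed

lemma follower_snoc_cong:
  assumes "follower S w = follower S v"
  shows "follower S (w @ [g]) = follower S (v @ [g])"
proof -
  have "follower S (u @ [g]) = {\<eta> \<in> S. conc [g] \<eta> \<in> follower S u}" for u
    unfolding follower_def using suffix_closed by (auto simp: conc_append)
  then show ?thesis
    using assms by simp
qed

lemma follower_pop_Nil: "j \<in> {m+1..2*m} \<Longrightarrow> follower S [j] = follower S []"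
  unfolding follower_def using prepend_pop suffix_closed by auto

lemma follower_push_pop:
  "set \<xi> \<subseteq> {1..m} \<Longrightarrow> i \<in> {1..m} \<Longrightarrow> follower S (\<xi> @ [i, i+m]) = follower S \<xi>"
  unfolding follower_def by (simp add: conc_append cancel_push_pop)

lemma lang_snoc_letter:
  assumes "w @ [g] \<in> lang S"
  shows "g \<in> {1..2*m}"
proof -
  obtain \<omega> k where "\<omega> \<in> S" "\<forall>j<length (w @ [g]). \<omega> (k + j) = (w @ [g]) ! j"
    using assms unfolding lang_def by blast
  then show ?thesis
    using letters[of \<omega> "k + length w"] by simp
qed

lemma lang_pop_matches_push:
  assumes "\<xi> @ [i, g] \<in> lang S" "i \<in> {1..m}" "g \<in> {m+1..2*m}"
  shows "g = i + m"
proof -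
  obtain \<omega> k where \<omega>: "\<omega> \<in> S" "\<forall>j<length (\<xi> @ [i, g]). \<omega> (k + j) = (\<xi> @ [i, g]) ! j"
    using assms(1) unfolding lang_def by blast
  have "\<omega> (k + length \<xi>) = i" "\<omega> (Suc (k + length \<xi>)) = g"
    using \<omega>(2)[rule_format, of "length \<xi>"] \<omega>(2)[rule_format, of "Suc (length \<xi>)"]
    by (simp_all add: nth_append)
  then show ?thesis
    using pop_matches_push[OF \<omega>(1), of "k + length \<xi>"] assms(2,3) by simp
qed

lemma stack_in_lang: "set \<xi> \<subseteq> {1..m} \<Longrightarrow> \<xi> \<in> lang S"
proof (induction \<xi> rule: rev_induct)
  case Nil
  show ?case
    using nonempty by (auto simp: mem_lang_iff_follower_nonempty follower_def)
next
  case (snoc i \<xi>)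
  then have "(\<xi> @ [i]) @ [i+m] \<in> lang S"
    using follower_push_pop[of \<xi> i] mem_lang_iff_follower_nonempty by simp
  then show ?case
    by (rule lang_appendD)
qed

lemma stack_snoc_cases:
  assumes \<xi>: "set \<xi> \<subseteq> {1..m}" and g: "g \<in> {1..2*m}" and "\<xi> @ [g] \<in> lang S"
  obtains "g \<in> {1..m}"
    | \<xi>' i where "\<xi> = \<xi>' @ [i]" "i \<in> {1..m}" "g = i + m" "follower S (\<xi> @ [g]) = follower S \<xi>'"
    | "\<xi> = []" "g \<in> {m+1..2*m}" "follower S (\<xi> @ [g]) = follower S []"
proof (cases "g \<le> m")
  case True
  then show ?thesis
    using that(1) g by simp
next
  case False
  then have pop: "g \<in> {m+1..2*m}"
    using g by auto
  show ?thesis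
  proof (cases \<xi> rule: rev_cases)
    case Nil
    then show ?thesis
      using that(3) pop follower_pop_Nil by simp
  next
    case (snoc \<xi>' i)
    have i: "i \<in> {1..m}" and \<xi>': "set \<xi>' \<subseteq> {1..m}"
      using \<xi> snoc by auto
    have "g = i + m"
      using assms(3) snoc lang_pop_matches_push i pop by simp
    then show ?thesis
      using that(2) snoc i follower_push_pop[OF \<xi>' i] by simp
  qed
qed

lemma follower_eq_stack:
  "w \<in> lang S \<Longrightarrow> \<exists>\<xi>. set \<xi> \<subseteq> {1..m} \<and> follower S w = follower S \<xi>"
proof (induction w rule: rev_induct)
  case Nil
  show ?case
    by (intro exI[of _ "[]"]) simp
next
  case (snoc g w)
  then obtain \<xi> where \<xi>: "set \<xi> \<subseteq> {1..m}" "follower S w = follower S \<xi>"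
    using lang_appendD by blast
  have e: "follower S (w @ [g]) = follower S (\<xi> @ [g])"
    using follower_snoc_cong \<xi>(2) by blast
  have g: "g \<in> {1..2*m}"
    using lang_snoc_letter snoc.prems by blast
  have "\<xi> @ [g] \<in> lang S"
    using e snoc.prems mem_lang_iff_follower_nonempty by simp
  then show ?case
  proof (rule stack_snoc_cases[OF \<xi>(1) g])
    assume "g \<in> {1..m}"
    then show ?thesis
      using e \<xi>(1) by (intro exI[of _ "\<xi> @ [g]"]) auto
  next
    fix \<xi>' i
    assume "\<xi> = \<xi>' @ [i]" "follower S (\<xi> @ [g]) = follower S \<xi>'"
    then show ?thesis
      using e \<xi>(1) by (intro exI[of _ \<xi>']) auto
  next
    assume "follower S (\<xi> @ [g]) = follower S []"
    then show ?thesis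
      using e by (intro exI[of _ "[]"]) auto
  qed
qed

lemma fsg_vertices_eq: "fsg_vertices S = {follower S \<xi> | \<xi>. set \<xi> \<subseteq> {1..m}}"
proof (intro set_eqI iffI)
  fix V
  assume "V \<in> fsg_vertices S"
  then obtain w where "V = follower S w" "w \<in> lang S"
    unfolding fsg_vertices_def by blast
  moreover obtain \<xi> where "set \<xi> \<subseteq> {1..m}" "follower S w = follower S \<xi>"
    using follower_eq_stack \<open>w \<in> lang S\<close> by blast
  ultimately show "V \<in> {follower S \<xi> | \<xi>. set \<xi> \<subseteq> {1..m}}"
    by blast
next
  fix V
  assume "V \<in> {follower S \<xi> | \<xi>. set \<xi> \<subseteq> {1..m}}"
  then obtain \<xi> where "V = follower S \<xi>" "set \<xi> \<subseteq> {1..m}"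
    by blast
  then show "V \<in> fsg_vertices S"
    unfolding fsg_vertices_def using stack_in_lang by blast
qed

lemma fsg_edgeI:
  assumes "w \<in> lang S" "v \<in> lang S" "g \<in> A" "follower S (w @ [g]) = follower S v"
  shows "(follower S w, g, follower S v) \<in> fsg_edges A S"
proof -
  have "w @ [g] \<in> lang S"
    using assms(2,4) mem_lang_iff_follower_nonempty by simp
  then show ?thesis
    unfolding fsg_edges_def using assms
    by (intro CollectI exI[of _ w] exI[of _ g] exI[of _ v]) simp
qed

lemma fsg_edge_cases:
  assumes "e \<in> fsg_edges {1..2*m} S"
  obtains (push) \<xi> i where "set \<xi> \<subseteq> {1..m}" "i \<in> {1..m}" "e = (follower S \<xi>, i, follower S (\<xi> @ [i]))"
    | (pop) \<xi> i where "set \<xi> \<subseteq> {1..m}" "i \<in> {1..m}" "e = (follower S (\<xi> @ [i]), i + m, follower S \<xi>)"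
    | (loop) i where "i \<in> {m+1..2*m}" "e = (follower S [], i, follower S [])"
proof -
  obtain w g v where e: "e = (follower S w, g, follower S v)" "w \<in> lang S" "v \<in> lang S"
      "g \<in> {1..2*m}" "w @ [g] \<in> lang S" "follower S v = follower S (w @ [g])"
    using assms by (rule fsg_edgesE)
  obtain \<xi> where \<xi>: "set \<xi> \<subseteq> {1..m}" "follower S w = follower S \<xi>"
    using follower_eq_stack e(2) by blast
  have v: "follower S v = follower S (\<xi> @ [g])"
    using e(6) follower_snoc_cong[OF \<xi>(2)] by (rule trans)
  then have "\<xi> @ [g] \<in> lang S"
    using e(3) mem_lang_iff_follower_nonempty by simp
  then show ?thesis
  proof (rule stack_snoc_cases[OF \<xi>(1) e(4)])
    assume "g \<in> {1..m}"
    then show ?thesis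
      using push \<xi> e(1) v by simp
  next
    fix \<xi>' i
    assume "\<xi> = \<xi>' @ [i]" "i \<in> {1..m}" "g = i + m" "follower S (\<xi> @ [g]) = follower S \<xi>'"
    then show ?thesis
      using pop[of \<xi>' i] \<xi> e(1) v by simp
  next
    assume "\<xi> = []" "g \<in> {m+1..2*m}" "follower S (\<xi> @ [g]) = follower S []"
    then show ?thesis
      using loop[of g] \<xi>(2) e(1) v by simp
  qed
qed

lemma fsg_edges_eq:
  "fsg_edges {1..2*m} S =
      {(follower S \<xi>, i, follower S (\<xi> @ [i])) | \<xi> i. set \<xi> \<subseteq> {1..m} \<and> i \<in> {1..m}}
    \<union> {(follower S (\<xi> @ [i]), i + m, follower S \<xi>) | \<xi> i. set \<xi> \<subseteq> {1..m} \<and> i \<in> {1..m}}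
    \<union> {(follower S [], i, follower S []) | i. i \<in> {m+1..2*m}}"
  (is "_ = ?push \<union> ?pop \<union> ?loop")
proof (intro set_eqI iffI)
  fix e
  assume "e \<in> fsg_edges {1..2*m} S"
  then show "e \<in> ?push \<union> ?pop \<union> ?loop"
  proof (cases rule: fsg_edge_cases)
    case (push \<xi> i)
    then have "e \<in> ?push"
      by blast
    then show ?thesis
      by (rule UnI1[OF UnI1])
  next
    case (pop \<xi> i)
    then have "e \<in> ?pop"
      by blast
    then show ?thesis
      by (rule UnI1[OF UnI2])
  next
    case (loop i)
    then have "e \<in> ?loop"
      by blast
    then show ?thesis
      by (rule UnI2)
  qed
next
  fix e
  assume "e \<in> ?push \<union> ?pop \<union> ?loop"
  then consider "e \<in> ?push" | "e \<in> ?pop" | "e \<in> ?loop"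
    by (elim UnE)
  then show "e \<in> fsg_edges {1..2*m} S"
  proof cases
    case 1
    then obtain \<xi> i where "e = (follower S \<xi>, i, follower S (\<xi> @ [i]))" "set \<xi> \<subseteq> {1..m}" "i \<in> {1..m}"
      by blast
    then show ?thesis
      using fsg_edgeI[of \<xi> "\<xi> @ [i]"] stack_in_lang by simp
  next
    case 2
    then obtain \<xi> i where "e = (follower S (\<xi> @ [i]), i + m, follower S \<xi>)" "set \<xi> \<subseteq> {1..m}" "i \<in> {1..m}"
      by blast
    then show ?thesis
      using fsg_edgeI[of "\<xi> @ [i]" \<xi>] stack_in_lang follower_push_pop by simp
  next
    case 3
    then obtain i where "e = (follower S [], i, follower S [])" "i \<in> {m+1..2*m}"
      by blast
    then show ?thesis
      using fsg_edgeI[of "[]" "[]"] stack_in_lang follower_pop_Nil by simp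
  qed
qed

end

lemma stack_shift_closure:
  assumes "stack_shift A m"
  shows "stack_shift (closure A) m"
proof -
  interpret A: stack_shift A m
    by fact
  show ?thesis
  proof
    show "closure A \<noteq> {}"
      using A.nonempty by simp
  next
    fix \<omega> n
    assume "\<omega> \<in> closure A"
    then show "\<omega> n \<in> {1..2*m}"
      using closure_two_symbol_property[where P = "\<lambda>x y. x \<in> {1..2*m}"] A.letters by blast
  next
    fix w \<eta>
    assume "conc w \<eta> \<in> closure A"
    then show "\<eta> \<in> closure A"
      using closure_conc_transfer[of id w A \<eta>] A.suffix_closed by simp
  next
    fix \<omega> j
    assume "\<omega> \<in> closure A" "j \<in> {m+1..2*m}"
    then show "conc [j] \<omega> \<in> closure A"
      using closure_conc_transfer[of "conc [j]" "[]" A \<omega>] A.prepend_pop continuous_on_conc by simp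
  next
    fix \<omega> n
    assume "\<omega> \<in> closure A" "\<omega> n \<in> {1..m}" "\<omega> (Suc n) \<in> {m+1..2*m}"
    then show "\<omega> (Suc n) = \<omega> n + m"
      using closure_two_symbol_property[where P = "\<lambda>x y. x \<in> {1..m} \<longrightarrow> y \<in> {m+1..2*m} \<longrightarrow> y = x + m"]
        A.pop_matches_push by blast
  next
    fix \<xi> i \<eta>
    assume \<xi>: "set \<xi> \<subseteq> {1..m}" and i: "i \<in> {1..m}"
    have "conc \<xi> \<eta> \<in> closure A" if "conc (\<xi> @ [i, i+m]) \<eta> \<in> closure A"
      using closure_conc_transfer[OF continuous_on_conc[of \<xi>], of "\<xi> @ [i, i+m]" A \<eta>] that
        A.cancel_push_pop[OF \<xi> i] by (simp add: conc_append)
    moreover have "conc (\<xi> @ [i, i+m]) \<eta> \<in> closure A" if "conc \<xi> \<eta> \<in> closure A"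
      using closure_conc_transfer[OF continuous_on_conc[of "\<xi> @ [i, i+m]"], of \<xi> A \<eta>] that
        A.cancel_push_pop[OF \<xi> i] by (simp add: conc_append)
    ultimately show "conc \<xi> (conc [i, i+m] \<eta>) \<in> closure A \<longleftrightarrow> conc \<xi> \<eta> \<in> closure A"
      by (auto simp: conc_append)
  qed
qed

section \<open>The coding of the map f_a\<close>

definition Omega_open :: "real \<Rightarrow> nat \<Rightarrow> nat \<Rightarrow> (real \<times> real) set" where
  "Omega_open a m j =
     (if j \<le> m then {(real j - 1) * a <..< real j * a} \<times> {0<..<1}
      else {real m * a <..< 1} \<times> {(real j - real m - 1) / real m <..< (real j - real m) / real m})"

lemma nat_eq_if_cells_overlap:
  fixes c x :: real
  assumes "0 < c" "(real i - 1) * c \<le> x" "x \<le> real i * c" "(real j - 1) * c < x" "x < real j * c"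
  shows "i = j"
proof -
  have "(real i - 1) * c < real j * c" "(real j - 1) * c < real i * c"
    using assms(2-5) by linarith+
  then have "real i - 1 < real j" "real j - 1 < real i"
    using assms(1) by (simp_all add: mult_less_cancel_right)
  then show ?thesis
    by linarith
qed

locale hc_map =
  fixes a :: real and m :: nat
  assumes m_ge_2: "m \<ge> 2" and a_pos: "0 < a" and a_less: "a < 1 / real m"
begin

lemma m_pos: "0 < real m"
  using m_ge_2 by simp

lemma ma_less_1: "real m * a < 1"
  using a_less m_pos by (simp add: field_simps)

lemma push_column_le: "k \<le> m \<Longrightarrow> real k * a \<le> real m * a"
  using a_pos by (simp add: mult_right_mono)

lemma interior_Omega: "j \<in> {1..2*m} \<Longrightarrow> interior (Omega a m j) = Omega_open a m j"
proof -
  assume j: "j \<in> {1..2*m}"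
  consider "j \<le> 2*m - 1" | "j = 2*m"
    using j by force
  then show ?thesis
  proof cases
    case 1
    then show ?thesis
      by (simp add: Omega_def Omega_open_def interior_Times interior_atLeastLessThan
          interior_atLeastAtMost_real)
  next
    case 2
    then have "\<not> j \<le> m" "\<not> j \<le> 2*m - 1"
      using m_ge_2 by auto
    moreover have "(real j - real m - 1) / real m = (real m - 1) / real m"
      "(real j - real m) / real m = 1"
      using 2 m_pos by simp_all
    ultimately have "Omega a m j = {real m * a .. 1} \<times> {(real m - 1) / real m .. 1}"
      "Omega_open a m j = {real m * a <..< 1} \<times> {(real m - 1) / real m <..< 1}"
      unfolding Omega_def Omega_open_def by (simp_all only: if_False)
    then show ?thesis
      by (simp add: interior_Times interior_atLeastAtMost_real)
  qed
qed

lemma Omega_open_in_unit_square: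
  assumes j: "j \<in> {1..2*m}" and p: "p \<in> Omega_open a m j"
  shows "0 < fst p \<and> fst p < 1 \<and> 0 < snd p \<and> snd p < 1"
proof (cases "j \<le> m")
  case True
  then have "(real j - 1) * a < fst p" "fst p < real j * a" "0 < snd p" "snd p < 1"
    using p by (auto simp: Omega_open_def)
  moreover have "0 \<le> (real j - 1) * a"
    using j a_pos by simp
  ultimately show ?thesis
    using push_column_le[OF True] ma_less_1 by linarith
next
  case False
  then have "real m * a < fst p" "fst p < 1"
    "(real j - real m - 1) / real m < snd p" "snd p < (real j - real m) / real m"
    using p by (auto simp: Omega_open_def)
  moreover have "0 \<le> (real j - real m - 1) / real m" "(real j - real m) / real m \<le> 1"
    using False j m_pos by (simp_all add: field_simps)
  moreover have "0 < real m * a"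
    using a_pos m_pos by simp
  ultimately show ?thesis
    by linarith
qed

lemma Omega_open_index_unique:
  assumes i: "i \<in> {1..2*m}" and j: "j \<in> {1..2*m}"
    and pj: "p \<in> Omega_open a m j" and pi: "p \<in> Omega a m i"
  shows "i = j"
proof -
  obtain x y where p: "p = (x, y)"
    by fastforce
  consider (push_push) "i \<le> m" "j \<le> m" | (push_pop) "i \<le> m" "\<not> j \<le> m"
    | (pop_push) "\<not> i \<le> m" "j \<le> m" | (pop_pop) "\<not> i \<le> m" "\<not> j \<le> m"
    by blast
  then show ?thesis
  proof cases
    case push_push
    then have "(real i - 1) * a \<le> x" "x \<le> real i * a" "(real j - 1) * a < x" "x < real j * a"
      using pi pj p by (auto simp: Omega_def Omega_open_def)
    with a_pos show ?thesis
      by (rule nat_eq_if_cells_overlap)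
  next
    case push_pop
    then have "x < real i * a" "real m * a < x"
      using pi pj p by (auto simp: Omega_def Omega_open_def)
    then show ?thesis
      using push_column_le[of i] push_pop by linarith
  next
    case pop_push
    then have "real m * a \<le> x" "x < real j * a"
      using pi pj p by (auto simp: Omega_def Omega_open_def split: if_splits)
    then show ?thesis
      using push_column_le[of j] pop_push by linarith
  next
    case pop_pop
    have "(real j - real m - 1) / real m < y" "y < (real j - real m) / real m"
      using pj p pop_pop by (auto simp: Omega_open_def)
    then have "(real j - 1) * 1 < real m * y + real m" "real m * y + real m < real j * 1"
      using m_pos by (simp_all add: field_simps)
    moreover have "(real i - 1) * 1 \<le> real m * y + real m \<and> real m * y + real m \<le> real i * 1"
    proof (cases "i \<le> 2*m - 1")
      case True
      then have "(real i - real m - 1) / real m \<le> y" "y \<le> (real i - real m) / real m"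
        using pi p pop_pop by (auto simp: Omega_def)
      then show ?thesis
        using m_pos by (simp add: field_simps)
    next
      case False
      then have "i = 2*m" "(real m - 1) / real m \<le> y" "y \<le> 1"
        using i pi p pop_pop by (auto simp: Omega_def)
      then show ?thesis
        using m_pos by (simp add: field_simps)
    qed
    ultimately show ?thesis
      using nat_eq_if_cells_overlap[of 1 i "real m * y + real m" j] by simp
  qed
qed

lemma F_map_push:
  assumes i: "i \<in> {1..m}" and x: "(real i - 1) * a < x" "x < real i * a"
  shows "F_map a m x = (x - (real i - 1) * a) / a"
proof -
  have "(THE k. k \<in> {1..m} \<and> x \<in> {(real k - 1) * a ..< real k * a}) = i"
  proof (rule the_equality)
    show "i \<in> {1..m} \<and> x \<in> {(real i - 1) * a ..< real i * a}"
      using i x by simp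
  next
    fix k
    assume "k \<in> {1..m} \<and> x \<in> {(real k - 1) * a ..< real k * a}"
    then show "k = i"
      using nat_eq_if_cells_overlap[OF a_pos, of k x i] x by auto
  qed
  moreover have "x < real m * a"
    using x push_column_le[of i] i by simp
  ultimately show ?thesis
    by (simp add: F_map_def Let_def)
qed

lemma F_map_pop: "real m * a \<le> x \<Longrightarrow> F_map a m x = (x - real m * a) / (1 - real m * a)"
  by (simp add: F_map_def)

lemma Omega_index:
  assumes "j \<in> {1..2*m}" "p \<in> Omega_open a m j"
  shows "(THE i. i \<in> {1..2*m} \<and> p \<in> Omega a m i) = j"
  using assms Omega_open_index_unique interior_Omega interior_subset
  by (intro the_equality) blast+

lemma interior_Omega_index:
  assumes "j \<in> {1..2*m}" "p \<in> Omega_open a m j"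
  shows "(THE i. i \<in> {1..2*m} \<and> p \<in> interior (Omega a m i)) = j"
  using assms Omega_open_index_unique interior_Omega interior_subset
  by (intro the_equality) blast+

lemma f_map_push:
  assumes i: "i \<in> {1..m}" and p: "p \<in> Omega_open a m i"
  shows "f_map a m p = ((fst p - (real i - 1) * a) / a, snd p / real m + (real i - 1) / real m)"
proof -
  have "(real i - 1) * a < fst p" "fst p < real i * a"
    using i p by (auto simp: Omega_open_def)
  then have "F_map a m (fst p) = (fst p - (real i - 1) * a) / a"
    using F_map_push i by blast
  moreover have "(THE k. k \<in> {1..2*m} \<and> p \<in> Omega a m k) = i"
    using Omega_index[OF _ p] i by simp
  ultimately show ?thesis
    using i by (simp add: f_map_def Let_def)
qed

lemma f_map_pop:
  assumes j: "j \<in> {m+1..2*m}" and p: "p \<in> Omega_open a m j"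
  shows "f_map a m p = ((fst p - real m * a) / (1 - real m * a), real m * snd p - real j + real m + 1)"
proof -
  have "real m * a < fst p"
    using j p by (auto simp: Omega_open_def)
  then have "F_map a m (fst p) = (fst p - real m * a) / (1 - real m * a)"
    using F_map_pop by simp
  moreover have "(THE k. k \<in> {1..2*m} \<and> p \<in> Omega a m k) = j"
    using Omega_index[OF _ p] j by simp
  ultimately show ?thesis
    using j by (simp add: f_map_def Let_def)
qed

lemma snd_f_map_push:
  assumes i: "i \<in> {1..m}" and p: "p \<in> Omega_open a m i"
  shows "snd (f_map a m p) = snd p / real m + (real i - 1) / real m"
    and "(real i - 1) / real m < snd (f_map a m p)" "snd (f_map a m p) < real i / real m"
proof -
  show e: "snd (f_map a m p) = snd p / real m + (real i - 1) / real m"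
    using f_map_push[OF assms] by simp
  have "0 < snd p" "snd p < 1"
    using Omega_open_in_unit_square[OF _ p] i by auto
  then show "(real i - 1) / real m < snd (f_map a m p)" "snd (f_map a m p) < real i / real m"
    unfolding e using m_pos by (simp_all add: field_simps)
qed

lemma mem_X_set_iff: "p \<in> X_set a m \<longleftrightarrow> (\<forall>n. \<exists>i\<in>{1..2*m}. (f_map a m ^^ n) p \<in> Omega_open a m i)"
  unfolding X_set_def using interior_Omega by auto

lemma pi_map_X_set:
  assumes "p \<in> X_set a m"
  shows "pi_map a m p n \<in> {1..2*m}" "(f_map a m ^^ n) p \<in> Omega_open a m (pi_map a m p n)"
proof -
  obtain i where i: "i \<in> {1..2*m}" "(f_map a m ^^ n) p \<in> Omega_open a m i"
    using assms mem_X_set_iff by blast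
  then have "pi_map a m p n = i"
    unfolding pi_map_def using interior_Omega_index by simp
  then show "pi_map a m p n \<in> {1..2*m}" "(f_map a m ^^ n) p \<in> Omega_open a m (pi_map a m p n)"
    using i by simp_all
qed

lemma X_set_in_unit_square: "p \<in> X_set a m \<Longrightarrow> 0 < fst p \<and> fst p < 1 \<and> 0 < snd p \<and> snd p < 1"
  using pi_map_X_set[of p 0] Omega_open_in_unit_square by simp

lemma X_set_f_map:
  assumes "p \<in> X_set a m"
  shows "f_map a m p \<in> X_set a m" "pi_map a m (f_map a m p) = seq_drop 1 (pi_map a m p)"
proof -
  show "f_map a m p \<in> X_set a m"
    using assms unfolding mem_X_set_iff by (metis funpow_Suc_right comp_apply)
  show "pi_map a m (f_map a m p) = seq_drop 1 (pi_map a m p)"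
    unfolding pi_map_def seq_drop_def by (simp add: funpow_swap1)
qed

lemma X_set_funpow:
  assumes "p \<in> X_set a m"
  shows "(f_map a m ^^ k) p \<in> X_set a m \<and> pi_map a m ((f_map a m ^^ k) p) = seq_drop k (pi_map a m p)"
proof (induction k)
  case 0
  then show ?case
    using assms by (simp add: seq_drop_def)
next
  case (Suc k)
  then show ?case
    using X_set_f_map[of "(f_map a m ^^ k) p"] by (simp add: seq_drop_def)
qed

lemma X_set_preimage:
  assumes j: "j \<in> {1..2*m}" and q: "q \<in> Omega_open a m j" and fq: "f_map a m q \<in> X_set a m"
  shows "q \<in> X_set a m" "pi_map a m q = conc [j] (pi_map a m (f_map a m q))"
proof -
  show "q \<in> X_set a m"
    unfolding mem_X_set_iff
  proof
    fix n
    show "\<exists>i\<in>{1..2*m}. (f_map a m ^^ n) q \<in> Omega_open a m i"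
    proof (cases n)
      case 0
      then show ?thesis
        using j q by auto
    next
      case (Suc k)
      then show ?thesis
        using fq unfolding mem_X_set_iff by (metis funpow_Suc_right comp_apply)
    qed
  qed
  show "pi_map a m q = conc [j] (pi_map a m (f_map a m q))"
  proof
    fix n
    show "pi_map a m q n = conc [j] (pi_map a m (f_map a m q)) n"
    proof (cases n)
      case 0
      then show ?thesis
        using interior_Omega_index[OF j q] by (simp add: pi_map_def conc_def)
    next
      case (Suc k)
      have "(f_map a m ^^ Suc k) q = (f_map a m ^^ k) (f_map a m q)"
        by (simp add: funpow_swap1)
      then show ?thesis
        using Suc by (simp add: pi_map_def conc_def)
    qed
  qed
qed


lemma prepend_pop_point:
  assumes r: "r \<in> X_set a m" and j: "j \<in> {m+1..2*m}"
  shows "\<exists>q\<in>X_set a m. pi_map a m q = conc [j] (pi_map a m r)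
           \<and> snd q = snd r / real m + (real j - real m - 1) / real m"
proof -
  obtain x y where r_xy: "r = (x, y)"
    by fastforce
  have x: "0 < x" "x < 1" and y: "0 < y" "y < 1"
    using X_set_in_unit_square[OF r] r_xy by auto
  have ma: "0 < 1 - real m * a"
    using ma_less_1 by simp
  define q where "q = (real m * a + (1 - real m * a) * x, y / real m + (real j - real m - 1) / real m)"
  have "0 < (1 - real m * a) * x" "(1 - real m * a) * x < 1 - real m * a"
    using ma x by simp_all
  moreover have "(real j - real m - 1) / real m < y / real m + (real j - real m - 1) / real m"
    "y / real m + (real j - real m - 1) / real m < (real j - real m) / real m"
    using y m_pos by (simp_all add: field_simps)
  ultimately have q: "q \<in> Omega_open a m j"
    using j unfolding q_def Omega_open_def by simp
  have "f_map a m q = r"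
    using f_map_pop[OF j q] ma m_pos r_xy by (simp add: q_def field_simps)
  then have "q \<in> X_set a m" "pi_map a m q = conc [j] (pi_map a m r)"
    using X_set_preimage[OF _ q] j r by auto
  then show ?thesis
    using r_xy by (auto simp: q_def)
qed

lemma prepend_push_point:
  assumes r: "r \<in> X_set a m" and i: "i \<in> {1..m}"
    and row: "(real i - 1) / real m < snd r" "snd r < real i / real m"
  shows "\<exists>q\<in>X_set a m. pi_map a m q = conc [i] (pi_map a m r) \<and> snd q = real m * snd r - (real i - 1)"
proof -
  obtain x y where r_xy: "r = (x, y)"
    by fastforce
  have x: "0 < x" "x < 1"
    using X_set_in_unit_square[OF r] r_xy by auto
  have y: "real i - 1 < real m * y" "real m * y < real i"
    using row r_xy m_pos by (auto simp: field_simps)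
  define q where "q = ((real i - 1) * a + a * x, real m * y - (real i - 1))"
  have "0 < a * x" "a * x < a"
    using x a_pos by auto
  then have q: "q \<in> Omega_open a m i"
    using i y unfolding q_def Omega_open_def by (simp add: algebra_simps)
  have "f_map a m q = r"
    using f_map_push[OF i q] a_pos m_pos r_xy by (simp add: q_def field_simps)
  then have "q \<in> X_set a m" "pi_map a m q = conc [i] (pi_map a m r)"
    using X_set_preimage[OF _ q] i r by auto
  then show ?thesis
    using r_xy by (auto simp: q_def)
qed

lemma prepend_stack_point:
  assumes "p \<in> X_set a m" "set \<xi> \<subseteq> {1..m}" "pi_map a m p = conc \<xi> \<eta>"
    and "r \<in> X_set a m" "snd r = snd ((f_map a m ^^ length \<xi>) p)"
  shows "\<exists>q\<in>X_set a m. pi_map a m q = conc \<xi> (pi_map a m r) \<and> snd q = snd p"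
  using assms
proof (induction \<xi> arbitrary: p)
  case Nil
  then show ?case
    by auto
next
  case (Cons i \<xi>)
  have i: "i \<in> {1..m}"
    using Cons.prems(2) by simp
  have code: "pi_map a m p = conc [i] (conc \<xi> \<eta>)"
    using Cons.prems(3) conc_append[of "[i]" \<xi>] by simp
  then have p: "p \<in> Omega_open a m i"
    using pi_map_X_set[OF Cons.prems(1), of 0] by (simp add: conc_def)
  have fp: "f_map a m p \<in> X_set a m" "pi_map a m (f_map a m p) = conc \<xi> \<eta>"
    using X_set_f_map[OF Cons.prems(1)] code seq_drop_conc[of "[i]"] by simp_all
  have "snd r = snd ((f_map a m ^^ length \<xi>) (f_map a m p))"
    using Cons.prems(5) by (simp add: funpow_swap1)
  then obtain q' where q': "q' \<in> X_set a m" "pi_map a m q' = conc \<xi> (pi_map a m r)"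
    "snd q' = snd (f_map a m p)"
    using Cons.IH[OF fp(1) _ fp(2) Cons.prems(4)] Cons.prems(2) by auto
  have row: "(real i - 1) / real m < snd q'" "snd q' < real i / real m"
    and y: "snd q' = snd p / real m + (real i - 1) / real m"
    using snd_f_map_push[OF i p] q'(3) by simp_all
  obtain q where q: "q \<in> X_set a m" "pi_map a m q = conc [i] (pi_map a m q')"
    "snd q = real m * snd q' - (real i - 1)"
    using prepend_push_point[OF q'(1) i row] by blast
  have "snd q = snd p"
    using q(3) y m_pos by (simp add: field_simps)
  moreover have "pi_map a m q = conc (i # \<xi>) (pi_map a m r)"
    using q(2) q'(2) conc_append[of "[i]" \<xi>] by simp
  ultimately show ?case
    using q(1) by blast
qed

lemma pop_follows_push_point:
  assumes p: "p \<in> X_set a m" and i: "pi_map a m p n \<in> {1..m}"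
    and j: "pi_map a m p (Suc n) \<in> {m+1..2*m}"
  shows "pi_map a m p (Suc n) = pi_map a m p n + m"
proof -
  define i0 j0 y where "i0 = pi_map a m p n" and "j0 = pi_map a m p (Suc n)"
    and "y = snd (f_map a m ((f_map a m ^^ n) p))"
  have "(f_map a m ^^ n) p \<in> Omega_open a m i0"
    using pi_map_X_set[OF p, of n] i0_def by simp
  then have "(real i0 - 1) / real m < y" "y < real i0 / real m"
    using snd_f_map_push i i0_def y_def by auto
  moreover have "f_map a m ((f_map a m ^^ n) p) \<in> Omega_open a m j0"
    using pi_map_X_set[OF p, of "Suc n"] j0_def by simp
  then have "(real j0 - real m - 1) / real m < y" "y < (real j0 - real m) / real m"
    using j j0_def y_def by (auto simp: Omega_open_def)
  ultimately have "(real i0 - 1) / real m < (real j0 - real m) / real m"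
    "(real j0 - real m - 1) / real m < real i0 / real m"
    by linarith+
  then have "real i0 - 1 < real j0 - real m" "real j0 - real m - 1 < real i0"
    using m_pos by (simp_all add: divide_less_cancel)
  then show ?thesis
    unfolding i0_def j0_def by linarith
qed


lemma insert_push_pop_point:
  assumes p: "p \<in> X_set a m" and \<xi>: "set \<xi> \<subseteq> {1..m}" and i: "i \<in> {1..m}"
    and code: "pi_map a m p = conc \<xi> \<eta>"
  shows "\<exists>q\<in>X_set a m. pi_map a m q = conc \<xi> (conc [i, i+m] \<eta>)"
proof -
  define p' where "p' = (f_map a m ^^ length \<xi>) p"
  have p': "p' \<in> X_set a m" "pi_map a m p' = \<eta>"
    using X_set_funpow[OF p, of "length \<xi>"] code p'_def by auto
  obtain r1 where r1: "r1 \<in> X_set a m" "pi_map a m r1 = conc [i+m] \<eta>"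
    "snd r1 = snd p' / real m + (real (i+m) - real m - 1) / real m"
    using prepend_pop_point[OF p'(1), of "i+m"] i p'(2) by auto
  have "(real i - 1) / real m < snd r1" "snd r1 < real i / real m"
    using X_set_in_unit_square[OF p'(1)] r1(3) m_pos by (simp_all add: field_simps)
  then obtain r2 where r2: "r2 \<in> X_set a m" "pi_map a m r2 = conc [i] (pi_map a m r1)"
    "snd r2 = real m * snd r1 - (real i - 1)"
    using prepend_push_point[OF r1(1) i] by blast
  have "snd r2 = snd p'"
    using r2(3) r1(3) m_pos by (simp add: field_simps)
  then obtain q where "q \<in> X_set a m" "pi_map a m q = conc \<xi> (pi_map a m r2)"
    using prepend_stack_point[OF p \<xi> code r2(1)] p'_def by blast
  moreover have "pi_map a m r2 = conc [i, i+m] \<eta>"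
    using r2(2) r1(2) conc_append[of "[i]" "[i+m]"] by simp
  ultimately show ?thesis
    by auto
qed

lemma delete_push_pop_point:
  assumes p: "p \<in> X_set a m" and \<xi>: "set \<xi> \<subseteq> {1..m}" and i: "i \<in> {1..m}"
    and code: "pi_map a m p = conc \<xi> (conc [i, i+m] \<eta>)"
  shows "\<exists>q\<in>X_set a m. pi_map a m q = conc \<xi> \<eta>"
proof -
  define p0 where "p0 = (f_map a m ^^ length \<xi>) p"
  define p1 where "p1 = f_map a m p0"
  define p2 where "p2 = f_map a m p1"
  have im: "i + m \<in> {m+1..2*m}"
    using i by simp
  have p0X: "p0 \<in> X_set a m" "pi_map a m p0 = conc [i] (conc [i+m] \<eta>)"
    using X_set_funpow[OF p, of "length \<xi>"] code conc_append[of "[i]" "[i+m]"] p0_def by auto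
  then have p0: "p0 \<in> Omega_open a m i"
    using pi_map_X_set[OF p0X(1), of 0] by (simp add: conc_def)
  have p1X: "p1 \<in> X_set a m" "pi_map a m p1 = conc [i+m] \<eta>"
    using X_set_f_map[OF p0X(1)] p0X(2) seq_drop_conc[of "[i]"] p1_def by simp_all
  then have p1: "p1 \<in> Omega_open a m (i+m)"
    using pi_map_X_set[OF p1X(1), of 0] by (simp add: conc_def)
  have p2X: "p2 \<in> X_set a m" "pi_map a m p2 = \<eta>"
    using X_set_f_map[OF p1X(1)] p1X(2) seq_drop_conc[of "[i+m]"] p2_def by simp_all
  have "snd p1 = snd p0 / real m + (real i - 1) / real m"
    using snd_f_map_push(1)[OF i p0] p1_def by simp
  then have "real m * snd p1 = snd p0 + real i - 1"
    using m_pos by (simp add: field_simps)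
  moreover have "snd p2 = real m * snd p1 - real (i+m) + real m + 1"
    using f_map_pop[OF im p1] p2_def by simp
  ultimately have "snd p2 = snd ((f_map a m ^^ length \<xi>) p)"
    unfolding p0_def by simp
  then show ?thesis
    using prepend_stack_point[OF p \<xi> code p2X(1)] p2X(2) by auto
qed

lemma codes_cancel_push_pop:
  assumes \<xi>: "set \<xi> \<subseteq> {1..m}" and i: "i \<in> {1..m}"
  shows "conc \<xi> (conc [i, i+m] \<eta>) \<in> pi_map a m ` X_set a m \<longleftrightarrow> conc \<xi> \<eta> \<in> pi_map a m ` X_set a m"
proof
  assume "conc \<xi> (conc [i, i+m] \<eta>) \<in> pi_map a m ` X_set a m"
  then obtain p where "p \<in> X_set a m" "pi_map a m p = conc \<xi> (conc [i, i+m] \<eta>)"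
    by (metis imageE)
  then obtain q where "q \<in> X_set a m" "pi_map a m q = conc \<xi> \<eta>"
    using delete_push_pop_point[OF _ \<xi> i] by blast
  then show "conc \<xi> \<eta> \<in> pi_map a m ` X_set a m"
    by (metis image_eqI)
next
  assume "conc \<xi> \<eta> \<in> pi_map a m ` X_set a m"
  then obtain p where "p \<in> X_set a m" "pi_map a m p = conc \<xi> \<eta>"
    by (metis imageE)
  then obtain q where "q \<in> X_set a m" "pi_map a m q = conc \<xi> (conc [i, i+m] \<eta>)"
    using insert_push_pop_point[OF _ \<xi> i] by blast
  then show "conc \<xi> (conc [i, i+m] \<eta>) \<in> pi_map a m ` X_set a m"
    by (metis image_eqI)
qed

lemma two_cycle_abscissa:
  obtains x where "0 < x" "x < a" "real m * a < x / a" "x / a < 1"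
    "(x / a - real m * a) / (1 - real m * a) = x"
proof
  define D where "D = 1 - a + real m * a * a"
  have ma: "0 < real m * a" "real m * a < 1"
    using m_pos a_pos ma_less_1 by simp_all
  have "a * 1 \<le> a * real m"
    using m_ge_2 a_pos by (intro mult_left_mono) auto
  then have "a < 1"
    using ma by (simp add: mult.commute)
  have "real m * a * a < 1 * a"
    using ma a_pos by (intro mult_strict_right_mono)
  then have "D < 1"
    unfolding D_def by simp
  have "0 < (1 - a) * (1 - real m * a)"
    using \<open>a < 1\<close> ma by simp
  then have "real m * a < D"
    unfolding D_def by (simp add: algebra_simps)
  then have "0 < D"
    using ma by linarith
  define x where "x = a * (real m * a / D)"
  have x_a: "x / a = real m * a / D"
    unfolding x_def using a_pos by simp
  have "real m * a * D < real m * a"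
    using mult_strict_left_mono[OF \<open>D < 1\<close> ma(1)] by simp
  then show "real m * a < x / a" "x / a < 1"
    using \<open>0 < D\<close> \<open>real m * a < D\<close> unfolding x_a by (simp_all add: less_divide_eq)
  moreover have "0 < x / a"
    using \<open>0 < D\<close> ma unfolding x_a by simp
  ultimately show "0 < x" "x < a"
    using a_pos by (simp_all add: zero_less_divide_iff divide_less_eq)
  have "x / a * D = real m * a"
    unfolding x_a using \<open>0 < D\<close> by simp
  then have "x / a - real m * a = x / a * (1 - D)"
    by (simp add: right_diff_distrib)
  also have "\<dots> = x * (1 - real m * a)"
    using a_pos unfolding D_def by (simp add: field_simps)
  finally show "(x / a - real m * a) / (1 - real m * a) = x"
    using ma by simp
qed

lemma X_set_nonempty: "X_set a m \<noteq> {}"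
proof -
  obtain x where x: "0 < x" "x < a" "real m * a < x / a" "x / a < 1"
    and cycle: "(x / a - real m * a) / (1 - real m * a) = x"
    by (rule two_cycle_abscissa)
  define p0 where "p0 = (x, 1 / 2 :: real)"
  define p1 where "p1 = (x / a, 1 / (2 * real m))"
  have one: "1 \<in> {1..m}" and m1: "m + 1 \<in> {m+1..2*m}"
    using m_ge_2 by simp_all
  have p0: "p0 \<in> Omega_open a m 1"
    unfolding p0_def Omega_open_def using x m_ge_2 by simp
  have p1: "p1 \<in> Omega_open a m (m + 1)"
    unfolding p1_def Omega_open_def using x m_pos by (simp add: field_simps)
  have "f_map a m p0 = p1"
    using f_map_push[OF one p0] unfolding p0_def p1_def by simp
  moreover have "f_map a m p1 = p0"
    using f_map_pop[OF m1 p1] cycle m_pos unfolding p0_def p1_def by simp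
  ultimately have step: "f_map a m q \<in> {p0, p1}" if "q \<in> {p0, p1}" for q
    using that by auto
  have "(f_map a m ^^ n) p0 \<in> {p0, p1}" for n
  proof (induction n)
    case (Suc n)
    then show ?case
      using step[of "(f_map a m ^^ n) p0"] by simp
  qed simp
  moreover have "1 \<in> {1..2*m}" "m + 1 \<in> {1..2*m}"
    using m_ge_2 by simp_all
  ultimately have "p0 \<in> X_set a m"
    unfolding mem_X_set_iff using p0 p1 by (metis insertE singletonD)
  then show ?thesis
    by blast
qed

lemma stack_shift_coding: "stack_shift (pi_map a m ` X_set a m) m"
proof
  show "pi_map a m ` X_set a m \<noteq> {}"
    using X_set_nonempty by simp
next
  fix \<omega> n
  assume "\<omega> \<in> pi_map a m ` X_set a m"
  then obtain p where "p \<in> X_set a m" "\<omega> = pi_map a m p"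
    by blast
  then show "\<omega> n \<in> {1..2*m}"
    using pi_map_X_set(1) by simp
next
  fix w \<eta>
  assume "conc w \<eta> \<in> pi_map a m ` X_set a m"
  then obtain p where "p \<in> X_set a m" "pi_map a m p = conc w \<eta>"
    by (metis imageE)
  then have "(f_map a m ^^ length w) p \<in> X_set a m" "pi_map a m ((f_map a m ^^ length w) p) = \<eta>"
    using X_set_funpow[of p "length w"] by simp_all
  then show "\<eta> \<in> pi_map a m ` X_set a m"
    by (metis image_eqI)
next
  fix \<omega> j
  assume "\<omega> \<in> pi_map a m ` X_set a m" and j: "j \<in> {m+1..2*m}"
  then obtain r where r: "r \<in> X_set a m" "\<omega> = pi_map a m r"
    by blast
  obtain q where "q \<in> X_set a m" "pi_map a m q = conc [j] (pi_map a m r)"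
    using prepend_pop_point[OF r(1) j] by blast
  then show "conc [j] \<omega> \<in> pi_map a m ` X_set a m"
    using r(2) by (metis image_eqI)
next
  fix \<omega> n
  assume "\<omega> \<in> pi_map a m ` X_set a m" "\<omega> n \<in> {1..m}" "\<omega> (Suc n) \<in> {m+1..2*m}"
  moreover obtain p where "p \<in> X_set a m" "\<omega> = pi_map a m p"
    using calculation(1) by blast
  ultimately show "\<omega> (Suc n) = \<omega> n + m"
    using pop_follows_push_point by simp
next
  fix \<xi> i \<eta>
  assume "set \<xi> \<subseteq> {1..m}" "i \<in> {1..m}"
  then show "conc \<xi> (conc [i, i+m] \<eta>) \<in> pi_map a m ` X_set a m \<longleftrightarrow> conc \<xi> \<eta> \<in> pi_map a m ` X_set a m"
    by (rule codes_cancel_push_pop)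
qed

end

theorem proposition2p1:
  fixes m :: nat and a :: real
  assumes "m \<ge> 2" and "0 < a" and "a < 1 / real m"
  shows "fsg_vertices (Sigma_HC a m) =
           {follower (Sigma_HC a m) \<xi> | \<xi>. set \<xi> \<subseteq> {1..m}}
       \<and> fsg_edges {1..2*m} (Sigma_HC a m) =
           {(follower (Sigma_HC a m) \<xi>, i, follower (Sigma_HC a m) (\<xi> @ [i])) | \<xi> i.
               set \<xi> \<subseteq> {1..m} \<and> i \<in> {1..m}}
         \<union> {(follower (Sigma_HC a m) (\<xi> @ [i]), i + m, follower (Sigma_HC a m) \<xi>) | \<xi> i.
               set \<xi> \<subseteq> {1..m} \<and> i \<in> {1..m}}
         \<union> {(follower (Sigma_HC a m) [], i, follower (Sigma_HC a m) []) | i.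
               i \<in> {m+1..2*m}}"
proof -
  interpret hc_map a m
    using assms by unfold_locales
  interpret stack_shift "Sigma_HC a m" m
    unfolding Sigma_HC_def by (rule stack_shift_closure[OF stack_shift_coding])
  show ?thesis
    using fsg_vertices_eq fsg_edges_eq by (rule conjI)
qed

end
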